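(* There exists $C<\infty$ such that for all $n\ge1$ and all $N\ge1$, $\mathbb{E}\big[e_n|\psi_n|\mathbb{1}_{\{e_n|\psi_n|>N^{2/3}\}}\big]\le C N^{-1/3}.$
   Context: Let $\mathbb{T}=\mathbb{R}/\mathbb{Z}$, identified with $[-1/2,1/2)$. Let $v(k)=\sin(2\pi k)/|\sin(\pi k)|$ for $k\neq0$, $\phi(k)=\frac43\sin^2(\pi k)(1+2\cos^2(\pi k))$, and $p(k,k')=8\frac{\cos^2(\pi k)}{1+2\cos^2(\pi k)}\sin^4(\pi k')+8\frac{\sin^2(\pi k)}{1+2\cos^2(\pi k)}\sin^2(\pi k')\cos^2(\pi k')$. Let $(X_n)_{n\ge0}$ be a Markov chain on $\mathbb{T}$ with transition density $p$ and initial distribution $\mu$ with $\int_{\mathbb{T}}k^{-2}d\mu(k)<\infty$; let $(e_n)_{n\ge0}$ be i.i.d. Exp(1), independent of $(X_n)$; $\psi_n=v(X_n)/\phi(X_n)$. *)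

theory Defs
  imports "HOL-Probability.Probability"
begin

text \<open>The torus R/Z is identified with the interval [-1/2, 1/2).\<close>
definition torus :: "real set" where
  "torus = {-1/2..<1/2}"

definition vv :: "real \<Rightarrow> real" where
  "vv k = sin (2*pi*k) / \<bar>sin (pi*k)\<bar>"

definition phi :: "real \<Rightarrow> real" where
  "phi k = 4/3 * (sin (pi*k))^2 * (1 + 2 * (cos (pi*k))^2)"

definition pp :: "real \<Rightarrow> real \<Rightarrow> real" where
  "pp k k' = 8 * (cos (pi*k))^2 / (1 + 2*(cos (pi*k))^2) * (sin (pi*k'))^4
           + 8 * (sin (pi*k))^2 / (1 + 2*(cos (pi*k))^2) * (sin (pi*k'))^2 * (cos (pi*k'))^2"

definition psi :: "real \<Rightarrow> real" where
  "psi k = vv k / phi k"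

text \<open>mk m j A x = probability, for the chain with transition density pp (w.r.t.
 Lebesgue measure on the torus), started at time j in state x, that
 X_(j+1) in A (j+1), ..., X_(j+m) in A (j+m).\<close>
fun mk :: "nat \<Rightarrow> nat \<Rightarrow> (nat \<Rightarrow> real set) \<Rightarrow> real \<Rightarrow> ennreal" where
  "mk 0 j A x = 1"
| "mk (Suc m) j A x =
     (\<integral>\<^sup>+ y. indicator (torus \<inter> A (Suc j)) y * ennreal (pp x y) * mk m (Suc j) A y \<partial>lborel)"

definition markov_chain_pp :: "'a measure \<Rightarrow> (nat \<Rightarrow> 'a \<Rightarrow> real) \<Rightarrow> real measure \<Rightarrow> bool" where
  "markov_chain_pp M X \<mu> \<longleftrightarrow>
     (\<forall>i. X i \<in> borel_measurable M) \<and>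
     (\<forall>i. \<forall>\<omega>\<in>space M. X i \<omega> \<in> torus) \<and>
     (\<forall>n A. (\<forall>i. A i \<in> sets borel) \<longrightarrow>
        emeasure M {\<omega>\<in>space M. \<forall>i\<le>n. X i \<omega> \<in> A i}
          = (\<integral>\<^sup>+ x. indicator (A 0) x * mk n 0 A x \<partial>\<mu>))"

end

theory Submission
  imports Defs
begin

(* Write g = |psi x| and T = N^(2/3).  Three estimates combine:
   (1) Since X_n and e_n are independent and e_n ~ Exp(1), integrating out e_n gives
       E[e g 1{e g > T}] <= min(g, 2 g^2 / T)  for every fixed g >= 0.
   (2) For n >= 1 the law of X_n is dominated by the measure with Lebesgue density
       8 sin^2(pi y) on the torus, because the transition density satisfies
       p(x, y) <= 8 sin^2(pi y) uniformly in x.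
   (3) On the torus |psi x| sin^2(pi x) <= 3/2 and sin^2(pi x) >= 3 x^2, which makes
       8 sin^2(pi x) min(g, 2 g^2/T) <= 24 / (1 + T x^2); the integral of the latter
       over [-1/2, 1/2] is at most 24 pi / sqrt T = 24 pi N^(-1/3). *)

section \<open>Elementary bounds on the coefficients\<close>

text \<open>Jordan-type lower bound for sin^2 on the torus; it makes 1/sin^2 integrable
  against the weight 1/(1 + T x^2).\<close>
lemma sin_pi_sq_ge:
  fixes x :: real assumes "\<bar>x\<bar> \<le> 1/2"
  shows "3 * x^2 \<le> (sin (pi*x))^2"
proof -
  define y where "y = pi*x"
  have taylor: "\<bar>sin y - y\<bar> \<le> \<bar>y\<bar>^3/6"
    using Maclaurin_sin_bound[of y 3]
    by (simp add: numeral_3_eq_3 sin_coeff_def divide_simps eval_nat_numeral)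
  have pi_bounds: "157/50 \<le> pi" "pi \<le> 63/20" using pi_approx by auto
  have y_small: "\<bar>y\<bar> \<le> 8/5"
  proof -
    have "pi * \<bar>x\<bar> \<le> pi * (1/2)" using assms by (intro mult_left_mono) auto
    moreover have "\<bar>y\<bar> = pi*\<bar>x\<bar>" by (simp add: y_def abs_mult)
    ultimately show ?thesis using pi_bounds by linarith
  qed
  have "\<bar>y\<bar>^3 = \<bar>y\<bar> * \<bar>y\<bar>^2" by (simp add: power3_eq_cube power2_eq_square)
  also have "\<dots> \<le> \<bar>y\<bar> * (64/25)"
  proof (rule mult_left_mono)
    have "\<bar>y\<bar>^2 \<le> (8/5)^2" by (rule power_mono[OF y_small]) simp
    thus "\<bar>y\<bar>^2 \<le> 64/25" by (simp add: power2_eq_square)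
  qed simp
  finally have "\<bar>y\<bar> * (57/100) \<le> \<bar>sin y\<bar>"
    using taylor abs_triangle_ineq2[of y "sin y"] abs_minus_commute[of y "sin y"] by linarith
  hence "(\<bar>y\<bar> * (57/100))^2 \<le> \<bar>sin y\<bar>^2" by (intro power_mono) auto
  moreover have "(\<bar>y\<bar>*(57/100))^2 = y^2 * (3249/10000)"
    by (simp add: power_mult_distrib power_divide)
  ultimately have sin_y: "y^2 * (3249/10000) \<le> (sin y)^2" by (simp only: power2_abs)
  have "(157/50)^2 \<le> pi^2" using pi_bounds by (intro power_mono) auto
  hence pi_sq: "49/5 \<le> pi^2" by (simp add: power_divide)
  have "3 * x^2 \<le> ((3249/10000)*(49/5)) * x^2" by (intro mult_right_mono) auto
  also have "\<dots> \<le> ((3249/10000)*pi^2) * x^2"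
    using pi_sq by (intro mult_right_mono mult_left_mono) auto
  also have "\<dots> = y^2*(3249/10000)" by (simp add: y_def power_mult_distrib)
  also have "\<dots> \<le> (sin y)^2" by (rule sin_y)
  finally show ?thesis by (simp add: y_def)
qed

lemma abs_psi_mult_sin_sq_le: "\<bar>psi x\<bar> * (sin (pi*x))^2 \<le> 3/2"
proof (cases "sin (pi*x) = 0")
  case True thus ?thesis by (simp add: psi_def vv_def)
next
  case False
  let ?s = "sin (pi*x)" and ?c = "cos (pi*x)"
  have "sin (2*pi*x) = 2 * ?s * ?c" using sin_double[of "pi*x"] by (simp add: mult.assoc)
  hence abs_vv: "\<bar>vv x\<bar> = 2*\<bar>?c\<bar>" using False by (simp add: vv_def abs_mult)
  have s2: "?s^2 > 0" using False by simp
  have phi_ge: "phi x \<ge> 4/3 * ?s^2" unfolding phi_def using s2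
    by (simp add: mult_le_cancel_left1)
  have phi_pos: "phi x > 0" using phi_ge s2 by linarith
  have "\<bar>psi x\<bar> * ?s^2 = \<bar>vv x\<bar> * ?s^2 / phi x" using phi_pos by (simp add: psi_def abs_divide)
  also have "\<dots> \<le> 2 * ?s^2 / (4/3 * ?s^2)"
    using abs_vv phi_pos phi_ge s2 abs_cos_le_one[of "pi*x"]
    by (intro frac_le) (auto intro!: mult_right_mono)
  also have "\<dots> = 3/2" using s2 by simp
  finally show ?thesis .
qed

lemma pp_nonneg_le: "0 \<le> pp x y \<and> pp x y \<le> 8*(sin (pi*y))^2"
proof -
  define a where "a = (cos (pi*x))^2"
  define b where "b = (sin (pi*x))^2"
  define s where "s = (sin (pi*y))^2"
  define c where "c = (cos (pi*y))^2"
  have ab: "a + b = 1" "a \<ge> 0" "b \<ge> 0" by (auto simp: a_def b_def)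
  have sc: "s + c = 1" "s \<ge> 0" "c \<ge> 0" by (auto simp: s_def c_def)
  have den: "1 + 2*a > 0" using ab by simp
  have "pp x y = 8 * a / (1 + 2*a) * s^2 + 8 * b / (1 + 2*a) * s * c"
    unfolding pp_def a_def b_def s_def c_def by (simp add: mult.assoc flip: power_mult)
  hence factored: "pp x y = (8 * s/(1+2*a)) * (a * s + b * c)"
    by (simp add: algebra_simps power2_eq_square add_divide_distrib)
  have mix: "0 \<le> a * s + b * c" "a * s + b * c \<le> 1 + 2*a"
    using ab sc by (simp, smt (verit) mult_left_le mult_nonneg_nonneg)
  have coef: "8 * s/(1+2*a) \<ge> 0" using sc den by simp
  hence "(8 * s/(1+2*a)) * (a * s + b * c) \<le> (8 * s/(1+2*a)) * (1 + 2*a)"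
    using mix by (intro mult_left_mono) auto
  also have "\<dots> = 8 * s" using den by simp
  finally show ?thesis
    unfolding factored s_def[symmetric] using mult_nonneg_nonneg[OF coef mix(1)] by simp
qed

lemma psi_measurable[measurable]: "psi \<in> borel_measurable borel"
  unfolding psi_def vv_def phi_def by measurable

lemma pp_measurable[measurable]: "(\<lambda>(x,y). pp x y) \<in> borel_measurable (borel \<Otimes>\<^sub>M borel)"
  unfolding pp_def by measurable

lemma torus_borel[measurable]: "torus \<in> sets borel"
  unfolding torus_def by simp

section \<open>Domination of the one-time marginals of the chain\<close>

definition dom_density :: "real \<Rightarrow> ennreal" where
  "dom_density y = indicator torus y * ennreal (8*(sin (pi*y))^2)"

lemma dom_density_measurable[measurable]: "dom_density \<in> borel_measurable borel"
  unfolding dom_density_def by measurable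

lemma mk_measurable:
  assumes A: "\<And>i. A i \<in> sets borel"
  shows "mk m j A \<in> borel_measurable borel"
proof (induction m arbitrary: j)
  case 0 thus ?case by simp
next
  case (Suc m)
  have [measurable]: "A (Suc j) \<in> sets borel" "mk m (Suc j) A \<in> borel_measurable borel"
    using A Suc.IH by auto
  have "(\<lambda>(x,y). indicator (torus \<inter> A (Suc j)) y * ennreal (pp x y) * mk m (Suc j) A y)
         \<in> borel_measurable (borel \<Otimes>\<^sub>M lborel)"
    by measurable
  from lborel.borel_measurable_nn_integral[OF this]
  show ?case by (simp add: split_beta')
qed

lemma mk_Suc_le:
  assumes A: "\<And>i. A i \<in> sets borel"
  shows "mk (Suc m) j A x \<le> emeasure (density lborel dom_density) (A (j + Suc m)) * mk m j A x"
proof (induction m arbitrary: j x)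
  case 0
  have "mk (Suc 0) j A x = (\<integral>\<^sup>+ y. indicator (torus \<inter> A (Suc j)) y * ennreal (pp x y) \<partial>lborel)"
    by simp
  also have "\<dots> \<le> (\<integral>\<^sup>+ y. dom_density y * indicator (A (Suc j)) y \<partial>lborel)"
    using pp_nonneg_le[of x]
    by (intro nn_integral_mono) (auto simp: dom_density_def indicator_def intro!: ennreal_leI)
  also have "\<dots> = emeasure (density lborel dom_density) (A (Suc j))"
    using A by (intro emeasure_density[symmetric]) auto
  finally show ?case by simp
next
  case (Suc m)
  let ?w = "emeasure (density lborel dom_density) (A (j + Suc (Suc m)))"
  let ?step = "\<lambda>y. indicator (torus \<inter> A (Suc j)) y * ennreal (pp x y)"
  have [measurable]: "A (Suc j) \<in> sets borel" "mk m (Suc j) A \<in> borel_measurable borel"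
    "(\<lambda>y. pp x y) \<in> borel_measurable borel"
    using A mk_measurable[of A, OF A] by (auto simp: pp_def)
  have "mk (Suc (Suc m)) j A x = (\<integral>\<^sup>+ y. ?step y * mk (Suc m) (Suc j) A y \<partial>lborel)"
    by simp
  also have "\<dots> \<le> (\<integral>\<^sup>+ y. ?w * (?step y * mk m (Suc j) A y) \<partial>lborel)"
  proof (rule nn_integral_mono)
    fix y
    have "?step y * mk (Suc m) (Suc j) A y \<le> ?step y * (?w * mk m (Suc j) A y)"
      using Suc.IH[of "Suc j" y] by (intro mult_left_mono) auto
    thus "?step y * mk (Suc m) (Suc j) A y \<le> ?w * (?step y * mk m (Suc j) A y)"
      by (simp add: ac_simps)
  qed
  also have "\<dots> = ?w * mk (Suc m) j A x"
    by (subst nn_integral_cmult) auto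
  finally show ?case .
qed

text \<open>For n >= 1 the law of X_n is dominated by density lborel dom_density: apply the
  finite-dimensional distributions to the constraint X_n in B (no constraint at other
  times), peel off the last transition, and bound the remaining probability by 1.\<close>
lemma markov_chain_pp_distr_le:
  assumes "prob_space M" and chain: "markov_chain_pp M X \<mu>" and sets_mu: "sets \<mu> = sets borel"
    and n: "n \<ge> 1"
  shows "distr M borel (X n) \<le> density lborel dom_density"
  unfolding le_measure_iff
proof (simp add: le_fun_def, intro allI)
  interpret M: prob_space M by fact
  have X_meas[measurable]: "X i \<in> borel_measurable M" for i
    using chain unfolding markov_chain_pp_def by blast
  fix B :: "real set"
  show "emeasure (distr M borel (X n)) B \<le> emeasure (density lborel dom_density) B"
  proof (cases "B \<in> sets borel")
    case B: True
    obtain m where nm: "n = Suc m" using n by (cases n) auto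
    define A where "A i = (if i = n then B else UNIV)" for i
    have A: "\<And>i. A i \<in> sets borel" using B by (simp add: A_def)
    have mk_meas: "mk k 0 A \<in> borel_measurable \<mu>" for k
      by (simp add: measurable_cong_sets[OF sets_mu refl] mk_measurable[of A, OF A])
    have fdd: "emeasure M {\<omega>\<in>space M. \<forall>i\<le>k. X i \<omega> \<in> A i} = (\<integral>\<^sup>+ x. mk k 0 A x \<partial>\<mu>)" for k
    proof -
      have "A 0 = UNIV" using nm by (simp add: A_def)
      thus ?thesis using chain A unfolding markov_chain_pp_def by simp
    qed
    have A_last: "A (0 + Suc m) = B" by (simp add: A_def nm)
    let ?w = "emeasure (density lborel dom_density) B"
    have "emeasure (distr M borel (X n)) B = emeasure M {\<omega>\<in>space M. \<forall>i\<le>n. X i \<omega> \<in> A i}"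
      using B by (subst emeasure_distr) (auto simp: A_def intro!: arg_cong[where f="emeasure M"])
    also have "\<dots> = (\<integral>\<^sup>+ x. mk (Suc m) 0 A x \<partial>\<mu>)" by (simp add: fdd nm)
    also have "\<dots> \<le> (\<integral>\<^sup>+ x. ?w * mk m 0 A x \<partial>\<mu>)"
      using mk_Suc_le[of A m 0, OF A] by (intro nn_integral_mono) (simp only: A_last)
    also have "\<dots> = ?w * emeasure M {\<omega>\<in>space M. \<forall>i\<le>m. X i \<omega> \<in> A i}"
      by (simp add: nn_integral_cmult[OF mk_meas] fdd)
    also have "\<dots> \<le> ?w * 1" by (intro mult_left_mono M.emeasure_le_1) simp
    finally show ?thesis by simp
  qed (simp add: emeasure_notin_sets)
qed

section \<open>Integrating out an independent exponential variable\<close>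

lemma indep_var_nn_integral_iterated:
  assumes "prob_space M" and indep: "prob_space.indep_var M S Y T Z"
    and F: "F \<in> borel_measurable (S \<Otimes>\<^sub>M T)"
  shows "(\<integral>\<^sup>+ \<omega>. F (Y \<omega>, Z \<omega>) \<partial>M) = (\<integral>\<^sup>+ y. \<integral>\<^sup>+ z. F (y, z) \<partial>distr M T Z \<partial>distr M S Y)"
proof -
  interpret M: prob_space M by fact
  have Y: "Y \<in> measurable M S" and Z: "Z \<in> measurable M T"
    and joint: "distr M S Y \<Otimes>\<^sub>M distr M T Z = distr M (S \<Otimes>\<^sub>M T) (\<lambda>\<omega>. (Y \<omega>, Z \<omega>))"
    using indep unfolding M.indep_var_distribution_eq by auto
  interpret Z: prob_space "distr M T Z" using M.prob_space_distr[OF Z] .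
  have "(\<integral>\<^sup>+ \<omega>. F (Y \<omega>, Z \<omega>) \<partial>M) = integral\<^sup>N (distr M (S \<Otimes>\<^sub>M T) (\<lambda>\<omega>. (Y \<omega>, Z \<omega>))) F"
    using Y Z F by (intro nn_integral_distr[symmetric]) auto
  also have "\<dots> = (\<integral>\<^sup>+ y. \<integral>\<^sup>+ z. F (y, z) \<partial>distr M T Z \<partial>distr M S Y)"
    unfolding joint[symmetric] using F by (intro Z.nn_integral_fst[symmetric]) simp
  finally show ?thesis .
qed

text \<open>Truncated first moment of t g under Exp(1): it is at most the full mean g, and
  also at most E[(t g)^2]/T = 2 g^2 / T by Markov's trick.\<close>
lemma exponential_truncated_moment_le:
  fixes g T :: real assumes g: "0 \<le> g" and T: "0 < T"
  shows "(\<integral>\<^sup>+ t. ennreal (exponential_density 1 t) * ennreal (t * g * (if T < t * g then 1 else 0)) \<partial>lborel)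
         \<le> ennreal (min g (2*g^2/T))"
proof -
  let ?I = "(\<integral>\<^sup>+ t. ennreal (exponential_density 1 t) * ennreal (t * g * (if T < t * g then 1 else 0)) \<partial>lborel)"
  have moment: "(\<integral>\<^sup>+ t. ennreal c * (ennreal (t^k * exp (-t)) * indicator {0..} t) \<partial>lborel)
      = ennreal c * ennreal (fact k)" for c :: real and k
    by (subst nn_integral_cmult) (auto simp: nn_intergal_power_times_exp_Ici)
  have dominate: "?I \<le> (\<integral>\<^sup>+ t. ennreal c * (ennreal (t^k * exp (-t)) * indicator {0..} t) \<partial>lborel)"
    if c: "0 \<le> c" and pointwise: "\<And>t. 0 \<le> t \<Longrightarrow> t * g * (if T < t * g then 1 else 0) \<le> c * t^k"
    for c :: real and k
  proof (rule nn_integral_mono)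
    fix t :: real
    show "ennreal (exponential_density 1 t) * ennreal (t * g * (if T < t * g then 1 else 0))
          \<le> ennreal c * (ennreal (t^k * exp (-t)) * indicator {0..} t)"
    proof (cases "t < 0")
      case False
      hence "exp (-t) * (t * g * (if T < t * g then 1 else 0)) \<le> c * (t^k * exp (-t))"
        using pointwise[of t] by (simp add: mult.commute mult.left_commute)
      thus ?thesis using False g c
        by (simp add: exponential_density_def ennreal_mult'[symmetric] ennreal_leI)
    qed (simp add: exponential_density_def)
  qed
  have "?I \<le> ennreal g * ennreal (fact 1)"
    unfolding moment[symmetric] using g by (intro dominate) auto
  moreover have "?I \<le> ennreal (g^2/T) * ennreal (fact 2)"
  proof -
    have "t * g * (if T < t * g then 1 else 0) \<le> g^2/T * t^2" if "0 \<le> t" for t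
    proof (cases "T < t*g")
      case True
      hence "t*g*T \<le> t*g*(t*g)" using that g by (intro mult_left_mono) auto
      thus ?thesis using True T by (simp add: field_simps power2_eq_square)
    qed (use that g T in simp)
    thus ?thesis unfolding moment[symmetric] using T by (intro dominate) auto
  qed
  moreover have "ennreal (g^2/T) * ennreal (fact 2) = ennreal (2*g^2/T)"
    using T by (subst ennreal_mult'[symmetric]) (auto simp: ac_simps)
  ultimately have "?I \<le> min (ennreal g) (ennreal (2*g^2/T))" by simp
  also have "\<dots> = ennreal (min g (2*g^2/T))" using g T by (intro min_ennreal) auto
  finally show ?thesis .
qed

section \<open>The weighted integral of the truncated psi\<close>

lemma weighted_min_le:
  fixes g u x T :: real
  assumes g: "0 \<le> g" and u: "0 \<le> u" and gu: "g*u \<le> 3/2" and ux: "3*x^2 \<le> u" and T: "1 \<le> T"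
  shows "8*u*min g (2*g^2/T) \<le> 24/(1+T*x^2)"
proof -
  have Tux: "T*(3*x^2) \<le> T*u" using ux T by (intro mult_left_mono) auto
  show ?thesis
  proof (cases "u*T \<le> 3")
    case True
    hence "T*x^2 \<le> 1" using Tux by (simp add: mult.commute)
    moreover have "0 \<le> T*x^2" using T by simp
    ultimately have "12 \<le> 24/(1+T*x^2)" by (simp add: field_simps add_nonneg_pos)
    moreover have "8*u*min g (2*g^2/T) \<le> 8*u*g" using u by (intro mult_left_mono) auto
    moreover have "8*u*g \<le> 12" using gu by (simp add: mult.commute)
    ultimately show ?thesis by linarith
  next
    case False
    have "8*u*min g (2*g^2/T) \<le> 8*u*(2*g^2/T)" using u by (intro mult_left_mono) auto
    also have "\<dots> = 16*(g*u)^2/(u*T)" using False T by (simp add: field_simps power2_eq_square)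
    also have "\<dots> \<le> 16*(3/2)^2/(u*T)" using False T g u gu
      by (intro divide_right_mono mult_left_mono power_mono) auto
    also have "\<dots> \<le> 24/(1+T*x^2)"
    proof -
      have "36*(1+T*x^2) \<le> 24*(u*T)" using False Tux by (simp add: algebra_simps)
      thus ?thesis using False T by (simp add: field_simps add_pos_nonneg)
    qed
    finally show ?thesis .
  qed
qed

text \<open>The Cauchy-type weight 24/(1 + a^2 x^2) has integral at most 24 pi / a,
  via the antiderivative arctan.\<close>
lemma arctan_weight_integral_le:
  fixes a :: real assumes a: "0 < a"
  shows "(\<integral>\<^sup>+ x. ennreal (24/(1+a^2*x^2)) * indicator {-1/2..1/2} x \<partial>lborel) \<le> ennreal (24*pi/a)"
proof -
  define F where "F x = 24/a * arctan (a*x)" for x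
  have deriv: "(F has_real_derivative 24/(1+a^2*x^2)) (at x)" for x
  proof -
    have "(F has_real_derivative 24/a * (inverse (1 + (a*x)^2) * a)) (at x)"
      unfolding F_def by (auto intro!: derivative_eq_intros)
    thus ?thesis using a by (simp add: field_simps power_mult_distrib)
  qed
  have "((\<lambda>x. 24/(1+a^2*x^2)) has_integral (F (1/2) - F (-1/2))) {-1/2..1/2}"
    by (rule fundamental_theorem_of_calculus)
       (auto simp: has_real_derivative_iff_has_vector_derivative[symmetric]
             intro!: has_field_derivative_at_within[OF deriv])
  hence "(\<integral>\<^sup>+ x. ennreal (24/(1+a^2*x^2)) * indicator {-1/2..1/2} x \<partial>lborel)
      = ennreal (F (1/2) - F (-1/2))"
    by (intro nn_integral_has_integral_lebesgue') (auto intro!: add_nonneg_pos)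
  moreover have "F (1/2) - F (-1/2) \<le> 24*pi/a"
  proof -
    have "arctan (a*(1/2)) - arctan (a*(-1/2)) \<le> pi"
      using arctan_ubound[of "a*(1/2)"] arctan_lbound[of "a*(-1/2)"] by linarith
    hence "24/a * (arctan (a*(1/2)) - arctan (a*(-1/2))) \<le> 24/a * pi"
      using a by (intro mult_left_mono) auto
    thus ?thesis by (simp add: F_def right_diff_distrib)
  qed
  ultimately show ?thesis by (simp add: ennreal_leI)
qed

lemma dominated_psi_tail_integral_le:
  fixes T :: real assumes T: "1 \<le> T"
  shows "(\<integral>\<^sup>+ x. dom_density x * ennreal (min \<bar>psi x\<bar> (2*\<bar>psi x\<bar>^2/T)) \<partial>lborel)
         \<le> ennreal (24*pi/sqrt T)"
proof -
  have "(\<integral>\<^sup>+ x. dom_density x * ennreal (min \<bar>psi x\<bar> (2*\<bar>psi x\<bar>^2/T)) \<partial>lborel)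
      \<le> (\<integral>\<^sup>+ x. ennreal (24/(1+(sqrt T)^2*x^2)) * indicator {-1/2..1/2} x \<partial>lborel)"
  proof (rule nn_integral_mono)
    fix x :: real
    show "dom_density x * ennreal (min \<bar>psi x\<bar> (2*\<bar>psi x\<bar>^2/T))
          \<le> ennreal (24/(1+(sqrt T)^2*x^2)) * indicator {-1/2..1/2} x"
    proof (cases "x \<in> torus")
      case True
      hence "\<bar>x\<bar> \<le> 1/2" and x: "x \<in> {-1/2..1/2}" by (auto simp: torus_def)
      hence "8*(sin (pi*x))^2*min \<bar>psi x\<bar> (2*\<bar>psi x\<bar>^2/T) \<le> 24/(1+T*x^2)"
        using abs_psi_mult_sin_sq_le[of x] sin_pi_sq_ge T by (intro weighted_min_le) auto
      thus ?thesis using True T x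
        by (simp add: dom_density_def ennreal_mult[symmetric] ennreal_leI)
    qed (simp add: dom_density_def)
  qed
  also have "\<dots> \<le> ennreal (24*pi/sqrt T)" using T by (intro arctan_weight_integral_le) auto
  finally show ?thesis .
qed

lemma psi_exponential_tail_le:
  assumes M: "prob_space M" and chain: "markov_chain_pp M X \<mu>" and sets_mu: "sets \<mu> = sets borel"
    and exp: "distributed M lborel e (exponential_density 1)"
    and indep: "prob_space.indep_var M borel (X n) borel e"
    and n: "n \<ge> 1" and T: "1 \<le> T"
  shows "(\<integral>\<^sup>+ \<omega>. ennreal (e \<omega> * \<bar>psi (X n \<omega>)\<bar> * indicator {\<omega>. e \<omega> * \<bar>psi (X n \<omega>)\<bar> > T} \<omega>) \<partial>M)
         \<le> ennreal (24*pi/sqrt T)"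
proof -
  define F where "F p = ennreal (snd p * \<bar>psi (fst p)\<bar> * (if T < snd p * \<bar>psi (fst p)\<bar> then 1 else 0))"
    for p :: "real \<times> real"
  have [measurable]: "F \<in> borel_measurable (borel \<Otimes>\<^sub>M borel)" unfolding F_def by measurable
  have exp_law: "distr M borel e = density lborel (exponential_density 1)"
    and [measurable]: "(\<lambda>x. ennreal (exponential_density 1 x)) \<in> borel_measurable borel"
    using exp unfolding distributed_def by (auto cong: distr_cong)
  have "(\<integral>\<^sup>+ \<omega>. ennreal (e \<omega> * \<bar>psi (X n \<omega>)\<bar> * indicator {\<omega>. e \<omega> * \<bar>psi (X n \<omega>)\<bar> > T} \<omega>) \<partial>M)
      = (\<integral>\<^sup>+ \<omega>. F (X n \<omega>, e \<omega>) \<partial>M)"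
    by (intro nn_integral_cong) (simp add: F_def indicator_def)
  also have "\<dots> = (\<integral>\<^sup>+ x. \<integral>\<^sup>+ t. F (x, t) \<partial>distr M borel e \<partial>distr M borel (X n))"
    using M indep by (rule indep_var_nn_integral_iterated) simp
  also have "\<dots> \<le> (\<integral>\<^sup>+ x. ennreal (min \<bar>psi x\<bar> (2*\<bar>psi x\<bar>^2/T)) \<partial>distr M borel (X n))"
  proof (rule nn_integral_mono)
    fix x
    show "(\<integral>\<^sup>+ t. F (x, t) \<partial>distr M borel e) \<le> ennreal (min \<bar>psi x\<bar> (2*\<bar>psi x\<bar>^2/T))"
      unfolding exp_law using exponential_truncated_moment_le[of "\<bar>psi x\<bar>" T] T
      by (subst nn_integral_density) (auto simp: F_def)
  qed
  also have "\<dots> \<le> (\<integral>\<^sup>+ x. ennreal (min \<bar>psi x\<bar> (2*\<bar>psi x\<bar>^2/T)) \<partial>density lborel dom_density)"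
    using markov_chain_pp_distr_le[OF M chain sets_mu n] by (intro nn_integral_mono_measure) auto
  also have "\<dots> \<le> ennreal (24*pi/sqrt T)"
    using dominated_psi_tail_integral_le[OF T] by (simp add: nn_integral_density)
  finally show ?thesis .
qed

theorem lemma5p2:
  fixes M :: "'a measure" and X e :: "nat \<Rightarrow> 'a \<Rightarrow> real" and \<mu> :: "real measure"
  assumes "prob_space M"
    and "prob_space \<mu>" and "sets \<mu> = sets borel" and "emeasure \<mu> torus = 1"
    and "(\<integral>\<^sup>+ k. (if k = 0 then \<infinity> else ennreal (1 / k^2)) \<partial>\<mu>) < \<infinity>"
    and "markov_chain_pp M X \<mu>"
    and "\<forall>i. distributed M lborel (e i) (exponential_density 1)"
    and "prob_space.indep_vars M (\<lambda>_. borel) e UNIV"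
    and "prob_space.indep_var M (Pi\<^sub>M UNIV (\<lambda>_. borel)) (\<lambda>\<omega> i. X i \<omega>)
                                (Pi\<^sub>M UNIV (\<lambda>_. borel)) (\<lambda>\<omega> i. e i \<omega>)"
  shows "\<exists>C::real. \<forall>n::nat. \<forall>N::real. n \<ge> 1 \<longrightarrow> N \<ge> 1 \<longrightarrow>
           (\<integral>\<^sup>+ \<omega>. ennreal (e n \<omega> * \<bar>psi (X n \<omega>)\<bar> *
                 indicator {\<omega>. e n \<omega> * \<bar>psi (X n \<omega>)\<bar> > N powr (2/3)} \<omega>) \<partial>M)
             \<le> ennreal (C * N powr (-1/3))"
proof (intro exI allI impI)
  fix n :: nat and N :: real
  assume n: "n \<ge> 1" and N: "N \<ge> 1"
  have indep_n: "prob_space.indep_var M borel (X n) borel (e n)"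
    using prob_space.indep_var_compose[OF assms(1) assms(9), of "\<lambda>f. f n" borel "\<lambda>f. f n" borel]
    by (simp add: comp_def)
  have T: "1 \<le> N powr (2/3)" using N by (intro ge_one_powr_ge_zero) auto
  have "sqrt (N powr (2/3)) = N powr (1/3)"
    using N by (simp add: sqrt_def root_powr_inverse powr_powr)
  hence "24*pi/sqrt (N powr (2/3)) = (24*pi) * N powr (-1/3)"
    by (simp add: powr_minus_divide)
  thus "(\<integral>\<^sup>+ \<omega>. ennreal (e n \<omega> * \<bar>psi (X n \<omega>)\<bar> *
                 indicator {\<omega>. e n \<omega> * \<bar>psi (X n \<omega>)\<bar> > N powr (2/3)} \<omega>) \<partial>M)
             \<le> ennreal ((24*pi) * N powr (-1/3))"
    using psi_exponential_tail_le[OF assms(1,6,3) assms(7)[rule_format, of n] indep_n n T] by simp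
qed

end
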